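(* Let $H,A$ be as in the context and $L\subseteq\ker\epsilon\subset H$ a subspace stable under the quantum double action $h\triangleright x=h_{(1)}xSh_{(2)}$, $a\triangleright x=\langle a,x_{(1)}\rangle x_{(2)}-\langle a,x\rangle1$. Define $[\ ,\ ]:L\otimes L\to L$ by $[x,y]=x_{(1)}\,y\,Sx_{(2)}$ and $\Psi:L\otimes L\to L\otimes L$ by \[\Psi(x\otimes y)=[x_{(1)},y]\otimes x_{(2)}-[x,y]\otimes 1\] (which equals $\sum_a e_a\triangleright y\otimes f^a\triangleright x$ for dual bases $\{e_a\}$ of $H$, $\{f^a\}$ of $A$, and so takes values in $L\otimes L$; here $[h,y]:=h_{(1)}ySh_{(2)}$ for $h\in H$). Then for all $x,y,z\in L$, \[[x,[y,z]]=[[x,y],z]+([\ ,[\ ,z]])\circ\Psi(x\otimes y),\qquad [x,y]=xy-\cdot\,\Psi(x\otimes y),\] where $[\ ,[\ ,z]](u\otimes v)=[u,[v,z]]$ and $\cdot$ is multiplication in $H$.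
   Context: $H,A$ are Hopf algebras over $\mathbb{C}$ with invertible antipodes, non-degenerately paired by a Hopf pairing $\langle\ ,\ \rangle$; Sweedler notation. $\Psi$ is the quantum double braiding on $L\otimes L$. *)

theory Defs
  imports Main "HOL.Complex"
begin

text \<open>
  An element of V (x) W is represented by a finite list of pairs (v_i, w_i), standing
  for the sum of the simple tensors v_i (x) w_i.  Two representatives denote the same
  tensor iff they agree on every bilinear form V x W -> C (tensor_eq).
  The coproduct is a map returning such a representative; Sweedler sums
  x_(1) (x) x_(2) are sums over the list Delta x.
\<close>

definition lin_form :: "(complex \<Rightarrow> 'v \<Rightarrow> 'v::ab_group_add) \<Rightarrow> ('v \<Rightarrow> complex) \<Rightarrow> bool" where
  "lin_form sc f \<longleftrightarrow> (\<forall>x y. f (x + y) = f x + f y) \<and> (\<forall>c x. f (sc c x) = c * f x)"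

definition lin_map :: "(complex \<Rightarrow> 'v \<Rightarrow> 'v::ab_group_add) \<Rightarrow> (complex \<Rightarrow> 'w \<Rightarrow> 'w::ab_group_add)
    \<Rightarrow> ('v \<Rightarrow> 'w) \<Rightarrow> bool" where
  "lin_map sv sw f \<longleftrightarrow> (\<forall>x y. f (x + y) = f x + f y) \<and> (\<forall>c x. f (sv c x) = sw c (f x))"

definition bilin_form :: "(complex \<Rightarrow> 'v \<Rightarrow> 'v::ab_group_add) \<Rightarrow> (complex \<Rightarrow> 'w \<Rightarrow> 'w::ab_group_add)
    \<Rightarrow> ('v \<Rightarrow> 'w \<Rightarrow> complex) \<Rightarrow> bool" where
  "bilin_form sv sw b \<longleftrightarrow> (\<forall>y. lin_form sv (\<lambda>x. b x y)) \<and> (\<forall>x. lin_form sw (b x))"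

definition trilin_form :: "(complex \<Rightarrow> 'v \<Rightarrow> 'v::ab_group_add) \<Rightarrow> ('v \<Rightarrow> 'v \<Rightarrow> 'v \<Rightarrow> complex) \<Rightarrow> bool" where
  "trilin_form sv t \<longleftrightarrow> (\<forall>y z. lin_form sv (\<lambda>x. t x y z)) \<and> (\<forall>x z. lin_form sv (\<lambda>y. t x y z))
      \<and> (\<forall>x y. lin_form sv (t x y))"

definition tensor_eq :: "(complex \<Rightarrow> 'v \<Rightarrow> 'v::ab_group_add) \<Rightarrow> (complex \<Rightarrow> 'w \<Rightarrow> 'w::ab_group_add)
    \<Rightarrow> ('v \<times> 'w) list \<Rightarrow> ('v \<times> 'w) list \<Rightarrow> bool" where
  "tensor_eq sv sw t u \<longleftrightarrow>
     (\<forall>b. bilin_form sv sw b \<longrightarrow> (\<Sum>(v,w)\<leftarrow>t. b v w) = (\<Sum>(v,w)\<leftarrow>u. b v w))"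

definition hopf_algebra :: "(complex \<Rightarrow> 'h \<Rightarrow> 'h::ring_1) \<Rightarrow> ('h \<Rightarrow> ('h \<times> 'h) list)
    \<Rightarrow> ('h \<Rightarrow> complex) \<Rightarrow> ('h \<Rightarrow> 'h) \<Rightarrow> bool" where
  "hopf_algebra sc D e S \<longleftrightarrow>
     vector_space sc
   \<and> (\<forall>c x y. sc c (x * y) = sc c x * y \<and> sc c (x * y) = x * sc c y)
   \<comment> \<open>coproduct: linear, multiplicative, unital, coassociative\<close>
   \<and> (\<forall>x y. tensor_eq sc sc (D (x + y)) (D x @ D y))
   \<and> (\<forall>c x. tensor_eq sc sc (D (sc c x)) (map (\<lambda>(a,b). (sc c a, b)) (D x)))
   \<and> (\<forall>x y. tensor_eq sc sc (D (x * y)) (concat (map (\<lambda>(a,b). map (\<lambda>(c,d). (a * c, b * d)) (D y)) (D x))))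
   \<and> tensor_eq sc sc (D 1) [(1, 1)]
   \<and> (\<forall>x t. trilin_form sc t \<longrightarrow>
        (\<Sum>(a,b)\<leftarrow>D x. \<Sum>(c,d)\<leftarrow>D a. t c d b) = (\<Sum>(a,b)\<leftarrow>D x. \<Sum>(c,d)\<leftarrow>D b. t a c d))
   \<comment> \<open>counit: linear, multiplicative, unital, counit axioms\<close>
   \<and> lin_form sc e \<and> (\<forall>x y. e (x * y) = e x * e y) \<and> e 1 = 1
   \<and> (\<forall>x. (\<Sum>(a,b)\<leftarrow>D x. sc (e a) b) = x \<and> (\<Sum>(a,b)\<leftarrow>D x. sc (e b) a) = x)
   \<comment> \<open>antipode: linear, antipode axioms\<close>
   \<and> lin_map sc sc S
   \<and> (\<forall>x. (\<Sum>(a,b)\<leftarrow>D x. S a * b) = sc (e x) 1 \<and> (\<Sum>(a,b)\<leftarrow>D x. a * S b) = sc (e x) 1)"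

definition nondeg_hopf_pairing ::
  "(complex \<Rightarrow> 'a \<Rightarrow> 'a::ring_1) \<Rightarrow> ('a \<Rightarrow> ('a \<times> 'a) list) \<Rightarrow> ('a \<Rightarrow> complex) \<Rightarrow> ('a \<Rightarrow> 'a)
   \<Rightarrow> (complex \<Rightarrow> 'h \<Rightarrow> 'h::ring_1) \<Rightarrow> ('h \<Rightarrow> ('h \<times> 'h) list) \<Rightarrow> ('h \<Rightarrow> complex) \<Rightarrow> ('h \<Rightarrow> 'h)
   \<Rightarrow> ('a \<Rightarrow> 'h \<Rightarrow> complex) \<Rightarrow> bool" where
  "nondeg_hopf_pairing sA DA eA SA sH DH eH SH p \<longleftrightarrow>
     bilin_form sA sH p
   \<and> (\<forall>a b x. p (a * b) x = (\<Sum>(x1,x2)\<leftarrow>DH x. p a x1 * p b x2))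
   \<and> (\<forall>a x y. p a (x * y) = (\<Sum>(a1,a2)\<leftarrow>DA a. p a1 x * p a2 y))
   \<and> (\<forall>x. p 1 x = eH x) \<and> (\<forall>a. p a 1 = eA a)
   \<and> (\<forall>a x. p (SA a) x = p a (SH x))
   \<and> (\<forall>a. (\<forall>x. p a x = 0) \<longrightarrow> a = 0)
   \<and> (\<forall>x. (\<forall>a. p a x = 0) \<longrightarrow> x = 0)"

definition is_subspace :: "(complex \<Rightarrow> 'v \<Rightarrow> 'v::ab_group_add) \<Rightarrow> 'v set \<Rightarrow> bool" where
  "is_subspace sc L \<longleftrightarrow> 0 \<in> L \<and> (\<forall>x\<in>L. \<forall>y\<in>L. x + y \<in> L) \<and> (\<forall>c. \<forall>x\<in>L. sc c x \<in> L)"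

text \<open>[h,y] = h_(1) y S h_(2): also the quantum double action of H.\<close>
definition qbracket :: "('h::ring_1 \<Rightarrow> ('h \<times> 'h) list) \<Rightarrow> ('h \<Rightarrow> 'h) \<Rightarrow> 'h \<Rightarrow> 'h \<Rightarrow> 'h" where
  "qbracket D S h y = (\<Sum>(h1,h2)\<leftarrow>D h. h1 * y * S h2)"

definition actA :: "(complex \<Rightarrow> 'h \<Rightarrow> 'h::ring_1) \<Rightarrow> ('h \<Rightarrow> ('h \<times> 'h) list)
    \<Rightarrow> ('a \<Rightarrow> 'h \<Rightarrow> complex) \<Rightarrow> 'a \<Rightarrow> 'h \<Rightarrow> 'h" where
  "actA sc D p a x = (\<Sum>(x1,x2)\<leftarrow>D x. sc (p a x1) x2) - sc (p a x) 1"

definition qPsi :: "('h::ring_1 \<Rightarrow> ('h \<times> 'h) list) \<Rightarrow> ('h \<Rightarrow> 'h) \<Rightarrow> 'h \<Rightarrow> 'h \<Rightarrow> ('h \<times> 'h) list" where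
  "qPsi D S x y = map (\<lambda>(x1,x2). (qbracket D S x1 y, x2)) (D x) @ [(- qbracket D S x y, 1)]"

end

theory Submission
  imports Defs
begin

text \<open>
  Write [h,w] = h_(1) w S h_(2).  Since S is anti-multiplicative, [gh,w] = [g,[h,w]];
  since x_(1) y S x_(2) x_(3) = x y, also x y = [x_(1),y] x_(2).  Hence
  [x,[y,z]] = [xy,z] = [[x_(1),y],[x_(2),z]], and splitting off the term
  [[x,y],[1,z]] = [[x,y],z] gives both identities.  They hold for all x, y, z in H.  The pairing is used only to separate the points of H:
  tensors are compared through scalar bilinear forms, and composing with the separating
  forms of the pairing turns this into comparison through H-valued bilinear maps.
\<close>

lemma sum_list_swap_pairs:
  "(\<Sum>(a,b)\<leftarrow>xs. \<Sum>(c,d)\<leftarrow>ys. f a b c d)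
     = (\<Sum>(c,d)\<leftarrow>ys. \<Sum>(a,b)\<leftarrow>xs. (f a b c d :: 'b::comm_monoid_add))"
  by (induction xs) (simp_all add: sum_list_addf case_prod_beta')

lemma sum_list_concat_map_pairs:
  "(\<Sum>(u,v)\<leftarrow>concat (map (\<lambda>(a,b). map (\<lambda>(c,d). (F a b c d, G a b c d)) ys) xs). g u v)
     = (\<Sum>(a,b)\<leftarrow>xs. \<Sum>(c,d)\<leftarrow>ys. (g (F a b c d) (G a b c d) :: 'b::comm_monoid_add))"
  by (induction xs) (auto simp: case_prod_beta' o_def)

locale separated_hopf_algebra =
  fixes sc :: "complex \<Rightarrow> 'h::ring_1 \<Rightarrow> 'h" and D :: "'h \<Rightarrow> ('h \<times> 'h) list"
    and e :: "'h \<Rightarrow> complex" and S :: "'h \<Rightarrow> 'h"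
    and \<phi> :: "'i \<Rightarrow> 'h \<Rightarrow> complex"
  assumes hopf_algebra: "hopf_algebra sc D e S"
    and lin_form_\<phi>: "\<And>i. lin_form sc (\<phi> i)"
    and \<phi>_separating: "\<And>x. (\<And>i. \<phi> i x = 0) \<Longrightarrow> x = 0"
begin

sublocale vector_space sc
  using hopf_algebra by (simp add: hopf_algebra_def)

lemma scale_mult_left: "sc c (x * y) = sc c x * y"
  and scale_mult_right: "sc c (x * y) = x * sc c y"
  and coproduct_add: "tensor_eq sc sc (D (x + y)) (D x @ D y)"
  and coproduct_scale: "tensor_eq sc sc (D (sc c x)) (map (\<lambda>(a,b). (sc c a, b)) (D x))"
  and coproduct_mult:
    "tensor_eq sc sc (D (x * y)) (concat (map (\<lambda>(a,b). map (\<lambda>(c,d). (a * c, b * d)) (D y)) (D x)))"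
  and coproduct_one: "tensor_eq sc sc (D 1) [(1, 1)]"
  and coassoc_forms: "trilin_form sc t \<Longrightarrow>
    (\<Sum>(a,b)\<leftarrow>D x. \<Sum>(c,d)\<leftarrow>D a. t c d b) = (\<Sum>(a,b)\<leftarrow>D x. \<Sum>(c,d)\<leftarrow>D b. t a c d)"
  and counit_mult: "e (x * y) = e x * e y"
  and counit_one: "e 1 = 1"
  and counit_left: "(\<Sum>(a,b)\<leftarrow>D x. sc (e a) b) = x"
  and counit_right: "(\<Sum>(a,b)\<leftarrow>D x. sc (e b) a) = x"
  and lin_antipode: "lin_map sc sc S"
  and antipode_left: "(\<Sum>(a,b)\<leftarrow>D x. S a * b) = sc (e x) 1"
  and antipode_right: "(\<Sum>(a,b)\<leftarrow>D x. a * S b) = sc (e x) 1"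
  using hopf_algebra unfolding hopf_algebra_def by blast+

lemma scale_one_mult: "sc c 1 * x = sc c x"
  by (metis scale_mult_left mult_1_left)

lemma mult_scale_one: "x * sc c 1 = sc c x"
  by (metis scale_mult_right mult_1_right)

lemma scale_sum_list_pairs: "sc c (\<Sum>(a,b)\<leftarrow>l. g a b) = (\<Sum>(a,b)\<leftarrow>l. sc c (g a b))"
  by (induction l) (auto simp: scale_right_distrib)

abbreviation lin :: "('h \<Rightarrow> 'h) \<Rightarrow> bool" where
  "lin \<equiv> lin_map sc sc"

lemma lin_add: "lin f \<Longrightarrow> f (x + y) = f x + f y"
  and lin_scale: "lin f \<Longrightarrow> f (sc c x) = sc c (f x)"
  by (simp_all add: lin_map_def)

lemma lin_zero: "lin f \<Longrightarrow> f 0 = 0"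
  using lin_scale[of f 0 0] by simp

lemma lin_minus: "lin f \<Longrightarrow> f (- x) = - f x"
  using lin_scale[of f "- 1" x] by simp

lemma lin_sum_list_pairs: "lin f \<Longrightarrow> f (\<Sum>(a,b)\<leftarrow>l. g a b) = (\<Sum>(a,b)\<leftarrow>l. f (g a b))"
  by (induction l) (auto simp: lin_add lin_zero)

lemma lin_id: "lin (\<lambda>x. x)"
  by (simp add: lin_map_def)

lemma lin_mult_const: "lin f \<Longrightarrow> lin (\<lambda>x. f x * c)"
  by (simp add: lin_map_def distrib_right scale_mult_left)

lemma lin_const_mult: "lin f \<Longrightarrow> lin (\<lambda>x. c * f x)"
  by (simp add: lin_map_def distrib_left scale_mult_right)

lemma lin_antipode_comp: "lin f \<Longrightarrow> lin (\<lambda>x. S (f x))"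
  using lin_antipode by (simp add: lin_map_def)

lemma lin_scale_comp: "lin f \<Longrightarrow> lin (\<lambda>x. sc k (f x))"
  by (simp add: lin_map_def scale_right_distrib mult.commute)

lemma lin_sum_list_pairs_fun: "(\<And>a b. lin (g a b)) \<Longrightarrow> lin (\<lambda>x. \<Sum>(a,b)\<leftarrow>l. g a b x)"
  by (induction l) (auto simp: lin_map_def scale_right_distrib)

lemmas lin_intros =
  lin_id lin_mult_const lin_const_mult lin_antipode_comp lin_scale_comp lin_sum_list_pairs_fun

definition bilin :: "('h \<Rightarrow> 'h \<Rightarrow> 'h) \<Rightarrow> bool" where
  "bilin g \<longleftrightarrow> (\<forall>w. lin (\<lambda>v. g v w)) \<and> (\<forall>v. lin (g v))"

lemma bilinI: "(\<And>w. lin (\<lambda>v. g v w)) \<Longrightarrow> (\<And>v. lin (g v)) \<Longrightarrow> bilin g"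
  by (simp add: bilin_def)

lemma bilinD: "bilin g \<Longrightarrow> lin (\<lambda>v. g v w)" "bilin g \<Longrightarrow> lin (g v)"
  by (simp_all add: bilin_def)

lemma \<phi>_diff: "\<phi> i (x - y) = \<phi> i x - \<phi> i y"
proof -
  have "\<phi> i x = \<phi> i (x - y) + \<phi> i y"
    using lin_form_\<phi>[of i] unfolding lin_form_def by (metis diff_add_cancel)
  then show ?thesis by simp
qed

lemma \<phi>_sum_list_pairs: "\<phi> i (\<Sum>(v,w)\<leftarrow>t. g v w) = (\<Sum>(v,w)\<leftarrow>t. \<phi> i (g v w))"
  by (induction t) (auto simp: \<phi>_diff[of i 0 0, simplified] lin_form_\<phi>[unfolded lin_form_def])

lemma eq_if_\<phi>_eq: "(\<And>i. \<phi> i x = \<phi> i y) \<Longrightarrow> x = y"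
  using \<phi>_separating[of "x - y"] by (simp add: \<phi>_diff)

lemma tensor_eq_sum:
  assumes "tensor_eq sc sc t u" and "bilin g"
  shows "(\<Sum>(v,w)\<leftarrow>t. g v w) = (\<Sum>(v,w)\<leftarrow>u. g v w)"
proof (rule eq_if_\<phi>_eq)
  fix i
  have "bilin_form sc sc (\<lambda>v w. \<phi> i (g v w))"
    using assms(2) lin_form_\<phi>[of i] unfolding bilin_def bilin_form_def lin_form_def lin_map_def
    by simp
  then show "\<phi> i (\<Sum>(v,w)\<leftarrow>t. g v w) = \<phi> i (\<Sum>(v,w)\<leftarrow>u. g v w)"
    using assms(1) unfolding tensor_eq_def \<phi>_sum_list_pairs by blast
qed

lemma coassoc:
  assumes "\<And>b c. lin (\<lambda>a. t a b c)" and "\<And>a c. lin (\<lambda>b. t a b c)" and "\<And>a b. lin (t a b)"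
  shows "(\<Sum>(a,b)\<leftarrow>D x. \<Sum>(c,d)\<leftarrow>D a. t c d b) = (\<Sum>(a,b)\<leftarrow>D x. \<Sum>(c,d)\<leftarrow>D b. t a c d)"
proof (rule eq_if_\<phi>_eq)
  fix i
  have "trilin_form sc (\<lambda>a b c. \<phi> i (t a b c))"
    using assms lin_form_\<phi>[of i] unfolding trilin_form_def lin_form_def lin_map_def by simp
  from coassoc_forms[OF this, of x] show "\<phi> i (\<Sum>(a,b)\<leftarrow>D x. \<Sum>(c,d)\<leftarrow>D a. t c d b)
      = \<phi> i (\<Sum>(a,b)\<leftarrow>D x. \<Sum>(c,d)\<leftarrow>D b. t a c d)"
    by (simp add: \<phi>_sum_list_pairs)
qed

lemma lin_coproduct_sum:
  assumes "bilin g"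
  shows "lin (\<lambda>x. \<Sum>(a,b)\<leftarrow>D x. g a b)"
proof -
  have "(\<Sum>(a,b)\<leftarrow>D (sc c x). g a b) = sc c (\<Sum>(a,b)\<leftarrow>D x. g a b)" for c x
  proof -
    have "(\<Sum>(a,b)\<leftarrow>D (sc c x). g a b) = (\<Sum>(a,b)\<leftarrow>map (\<lambda>(a,b). (sc c a, b)) (D x). g a b)"
      using tensor_eq_sum[OF coproduct_scale assms] .
    also have "\<dots> = (\<Sum>(a,b)\<leftarrow>D x. sc c (g a b))"
      using lin_scale[OF bilinD(1)[OF assms]] by (simp add: case_prod_beta' o_def)
    finally show ?thesis
      by (simp add: scale_sum_list_pairs)
  qed
  then show ?thesis
    using tensor_eq_sum[OF coproduct_add assms] by (simp add: lin_map_def)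
qed

lemma coproduct_mult_sum:
  "bilin g \<Longrightarrow> (\<Sum>(u,v)\<leftarrow>D (x * y). g u v) = (\<Sum>(a,b)\<leftarrow>D x. \<Sum>(c,d)\<leftarrow>D y. g (a * c) (b * d))"
  using tensor_eq_sum[OF coproduct_mult] by (simp add: sum_list_concat_map_pairs)

lemma coproduct_one_sum: "bilin g \<Longrightarrow> (\<Sum>(u,v)\<leftarrow>D 1. g u v) = g 1 1"
  using tensor_eq_sum[OF coproduct_one] by simp

lemma antipode_one: "S 1 = 1"
  using antipode_left[of 1] coproduct_one_sum[of "\<lambda>u v. S u * v"]
  by (simp add: counit_one bilinI lin_intros)

definition convolution :: "('h \<Rightarrow> 'h \<Rightarrow> 'h) \<Rightarrow> ('h \<Rightarrow> 'h \<Rightarrow> 'h) \<Rightarrow> 'h \<Rightarrow> 'h \<Rightarrow> 'h"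
    (infixl \<open>\<star>\<close> 70) where
  "(f \<star> g) a b = (\<Sum>(a1,a2)\<leftarrow>D a. \<Sum>(b1,b2)\<leftarrow>D b. f a1 b1 * g a2 b2)"

definition convolution_unit :: "'h \<Rightarrow> 'h \<Rightarrow> 'h" where
  "convolution_unit a b = sc (e a * e b) 1"

lemma convolution_assoc:
  assumes "bilin f" and "bilin g" and "bilin h"
  shows "(f \<star> g) \<star> h = f \<star> (g \<star> h)"
proof (intro ext)
  fix a b
  note lin = bilinD[OF assms(1)] bilinD[OF assms(2)] bilinD[OF assms(3)]
  have "((f \<star> g) \<star> h) a b = (\<Sum>(a1,a2)\<leftarrow>D a. \<Sum>(b1,b2)\<leftarrow>D b.
      \<Sum>(c,d)\<leftarrow>D a1. \<Sum>(p,q)\<leftarrow>D b1. f c p * g d q * h a2 b2)"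
    by (simp add: convolution_def sum_list_mult_const[symmetric] case_prod_beta')
  also have "\<dots> = (\<Sum>(a1,a2)\<leftarrow>D a. \<Sum>(c,d)\<leftarrow>D a1. \<Sum>(b1,b2)\<leftarrow>D b.
      \<Sum>(p,q)\<leftarrow>D b1. f c p * g d q * h a2 b2)"
    by (simp add: sum_list_swap_pairs[where xs = "D b"])
  also have "\<dots> = (\<Sum>(a1,a2)\<leftarrow>D a. \<Sum>(c,d)\<leftarrow>D a2. \<Sum>(b1,b2)\<leftarrow>D b.
      \<Sum>(p,q)\<leftarrow>D b1. f a1 p * g c q * h d b2)"
    by (rule coassoc) (intro lin_intros lin)+
  also have "\<dots> = (\<Sum>(a1,a2)\<leftarrow>D a. \<Sum>(c,d)\<leftarrow>D a2. \<Sum>(b1,b2)\<leftarrow>D b.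
      \<Sum>(p,q)\<leftarrow>D b2. f a1 b1 * g c p * h d q)"
    by (simp only: coassoc[of "\<lambda>x y z. f _ x * g _ y * h _ z"] lin_intros lin)
  also have "\<dots> = (\<Sum>(a1,a2)\<leftarrow>D a. \<Sum>(b1,b2)\<leftarrow>D b. \<Sum>(c,d)\<leftarrow>D a2.
      \<Sum>(p,q)\<leftarrow>D b2. f a1 b1 * (g c p * h d q))"
    by (simp add: sum_list_swap_pairs[where xs = "D b"] mult.assoc)
  also have "\<dots> = (f \<star> (g \<star> h)) a b"
    by (simp add: convolution_def sum_list_const_mult[symmetric] case_prod_beta')
  finally show "((f \<star> g) \<star> h) a b = (f \<star> (g \<star> h)) a b" .
qed

lemma convolution_unit_right:
  assumes "bilin f"
  shows "f \<star> convolution_unit = f"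
proof (intro ext)
  fix a b
  note lin = bilinD[OF assms]
  have "(f \<star> convolution_unit) a b
      = (\<Sum>(a1,a2)\<leftarrow>D a. \<Sum>(b1,b2)\<leftarrow>D b. f (sc (e a2) a1) (sc (e b2) b1))"
    by (simp add: convolution_def convolution_unit_def mult_scale_one lin_scale[OF lin(1)]
        lin_scale[OF lin(2)] mult.commute)
  also have "\<dots> = f a b"
    by (simp add: lin_sum_list_pairs[OF lin(1), symmetric] lin_sum_list_pairs[OF lin(2), symmetric]
        counit_right)
  finally show "(f \<star> convolution_unit) a b = f a b" .
qed

lemma convolution_unit_left:
  assumes "bilin g"
  shows "convolution_unit \<star> g = g"
proof (intro ext)
  fix a b
  note lin = bilinD[OF assms]
  have "(convolution_unit \<star> g) a b
      = (\<Sum>(a1,a2)\<leftarrow>D a. \<Sum>(b1,b2)\<leftarrow>D b. g (sc (e a1) a2) (sc (e b1) b2))"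
    by (simp add: convolution_def convolution_unit_def scale_one_mult lin_scale[OF lin(1)]
        lin_scale[OF lin(2)] mult.commute)
  also have "\<dots> = g a b"
    by (simp add: lin_sum_list_pairs[OF lin(1), symmetric] lin_sum_list_pairs[OF lin(2), symmetric]
        counit_left)
  finally show "(convolution_unit \<star> g) a b = g a b" .
qed

lemma antipode_of_mult_convolution_mult:
  "(\<lambda>a b. S (a * b)) \<star> (*) = convolution_unit"
proof (intro ext)
  fix a b
  have "((\<lambda>a b. S (a * b)) \<star> (*)) a b = (\<Sum>(u,v)\<leftarrow>D (a * b). S u * v)"
    by (simp add: convolution_def coproduct_mult_sum bilinI lin_intros mult.assoc)
  then show "((\<lambda>a b. S (a * b)) \<star> (*)) a b = convolution_unit a b"
    by (simp add: antipode_left counit_mult convolution_unit_def)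
qed

lemma mult_convolution_antipode_rev:
  "(*) \<star> (\<lambda>a b. S b * S a) = convolution_unit"
proof (intro ext)
  fix a b
  have "((*) \<star> (\<lambda>a b. S b * S a)) a b = (\<Sum>(a1,a2)\<leftarrow>D a. a1 * (\<Sum>(b1,b2)\<leftarrow>D b. b1 * S b2) * S a2)"
  proof -
    have "lin (\<lambda>w. a1 * (w * S a2))" for a1 a2
      by (intro lin_intros)
    from lin_sum_list_pairs[OF this, where g = "\<lambda>b1 b2. b1 * S b2" and l = "D b"] show ?thesis
      by (simp add: convolution_def mult.assoc)
  qed
  also have "\<dots> = (\<Sum>(a1,a2)\<leftarrow>D a. sc (e b) (a1 * S a2))"
    by (simp add: antipode_right mult_scale_one scale_mult_left)
  also have "\<dots> = sc (e b * e a) 1"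
    by (simp add: scale_sum_list_pairs[symmetric] antipode_right)
  finally show "((*) \<star> (\<lambda>a b. S b * S a)) a b = convolution_unit a b"
    by (simp add: convolution_unit_def mult.commute)
qed

text \<open>Both sides are convolution inverses of the multiplication map H \<otimes> H \<rightarrow> H.\<close>
lemma antipode_mult: "S (a * b) = S b * S a"
proof -
  have bilins: "bilin (\<lambda>a b. S (a * b))" "bilin (*)" "bilin (\<lambda>a b. S b * S a)"
    by (intro bilinI lin_intros)+
  have "(\<lambda>a b. S (a * b)) = (\<lambda>a b. S (a * b)) \<star> ((*) \<star> (\<lambda>a b. S b * S a))"
    by (simp add: mult_convolution_antipode_rev convolution_unit_right bilins)
  also have "\<dots> = ((\<lambda>a b. S (a * b)) \<star> (*)) \<star> (\<lambda>a b. S b * S a)"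
    by (simp add: convolution_assoc bilins)
  also have "\<dots> = (\<lambda>a b. S b * S a)"
    by (simp add: antipode_of_mult_convolution_mult convolution_unit_left bilins)
  finally show ?thesis
    by metis
qed

abbreviation ad :: "'h \<Rightarrow> 'h \<Rightarrow> 'h" where
  "ad \<equiv> qbracket D S"

lemma lin_ad: "lin (\<lambda>h. ad h w)"
  unfolding qbracket_def by (intro lin_coproduct_sum bilinI lin_intros)

lemma ad_one: "ad 1 w = w"
  unfolding qbracket_def by (simp add: coproduct_one_sum bilinI lin_intros antipode_one)

lemma ad_mult: "ad (g * h) w = ad g (ad h w)"
proof -
  have "ad (g * h) w = (\<Sum>(a,b)\<leftarrow>D g. \<Sum>(c,d)\<leftarrow>D h. a * (c * w * S d) * S b)"
    unfolding qbracket_def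
    by (simp add: coproduct_mult_sum bilinI lin_intros antipode_mult mult.assoc)
  also have "\<dots> = ad g (ad h w)"
  proof -
    have "lin (\<lambda>u. a * u * S b)" for a b
      by (intro lin_intros)
    from lin_sum_list_pairs[OF this, where g = "\<lambda>c d. c * w * S d" and l = "D h"] show ?thesis
      by (simp add: qbracket_def)
  qed
  finally show ?thesis .
qed

lemma coproduct_ad_mult: "(\<Sum>(a,b)\<leftarrow>D x. ad a y * b) = x * y"
proof -
  have "(\<Sum>(a,b)\<leftarrow>D x. ad a y * b) = (\<Sum>(a,b)\<leftarrow>D x. \<Sum>(c,d)\<leftarrow>D a. c * y * S d * b)"
    unfolding qbracket_def by (simp add: sum_list_mult_const[symmetric] case_prod_beta')
  also have "\<dots> = (\<Sum>(a,b)\<leftarrow>D x. \<Sum>(c,d)\<leftarrow>D b. a * y * S c * d)"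
    by (rule coassoc) (intro lin_intros)+
  also have "\<dots> = (\<Sum>(a,b)\<leftarrow>D x. a * y * (\<Sum>(c,d)\<leftarrow>D b. S c * d))"
  proof -
    have "lin (\<lambda>u. a * y * u)" for a
      by (intro lin_intros)
    from lin_sum_list_pairs[OF this, where g = "\<lambda>c d. S c * d"] show ?thesis
      by (simp add: mult.assoc)
  qed
  also have "\<dots> = (\<Sum>(a,b)\<leftarrow>D x. sc (e b) a * y)"
    by (simp add: antipode_left mult_scale_one scale_mult_left)
  also have "\<dots> = x * y"
    using counit_right[of x] by (simp add: sum_list_mult_const case_prod_beta')
  finally show ?thesis .
qed

lemma ad_ad: "ad x (ad y z) = (\<Sum>(a,b)\<leftarrow>D x. ad (ad a y) (ad b z))"
proof -
  have "ad x (ad y z) = ad (\<Sum>(a,b)\<leftarrow>D x. ad a y * b) z"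
    by (simp add: ad_mult coproduct_ad_mult)
  also have "\<dots> = (\<Sum>(a,b)\<leftarrow>D x. ad (ad a y) (ad b z))"
    by (simp add: lin_sum_list_pairs[OF lin_ad] ad_mult)
  finally show ?thesis .
qed

end

theorem proposition2p4:
  fixes sH :: "complex \<Rightarrow> 'h \<Rightarrow> 'h::ring_1" and DH :: "'h \<Rightarrow> ('h \<times> 'h) list"
    and eH :: "'h \<Rightarrow> complex" and SH :: "'h \<Rightarrow> 'h"
    and sA :: "complex \<Rightarrow> 'a \<Rightarrow> 'a::ring_1" and DA :: "'a \<Rightarrow> ('a \<times> 'a) list"
    and eA :: "'a \<Rightarrow> complex" and SA :: "'a \<Rightarrow> 'a"
    and p :: "'a \<Rightarrow> 'h \<Rightarrow> complex" and L :: "'h set"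
  assumes "hopf_algebra sH DH eH SH" and "bij SH"
    and "hopf_algebra sA DA eA SA" and "bij SA"
    and "nondeg_hopf_pairing sA DA eA SA sH DH eH SH p"
    and "is_subspace sH L" and "L \<subseteq> {x. eH x = 0}"
    and "\<forall>h. \<forall>x\<in>L. qbracket DH SH h x \<in> L"
    and "\<forall>a. \<forall>x\<in>L. actA sH DH p a x \<in> L"
    and "x \<in> L" and "y \<in> L" and "z \<in> L"
  shows "(qbracket DH SH x (qbracket DH SH y z)
           = qbracket DH SH (qbracket DH SH x y) z
             + (\<Sum>(u,v)\<leftarrow>qPsi DH SH x y. qbracket DH SH u (qbracket DH SH v z)))
       \<and> qbracket DH SH x y = x * y - (\<Sum>(u,v)\<leftarrow>qPsi DH SH x y. u * v)"
proof -
  interpret separated_hopf_algebra sH DH eH SH p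
    using assms(1,5) by unfold_locales (auto simp: nondeg_hopf_pairing_def bilin_form_def)
  have qPsi_sum: "(\<Sum>(u,v)\<leftarrow>qPsi DH SH x y. f u v) = (\<Sum>(a,b)\<leftarrow>DH x. f (ad a y) b) + f (- ad x y) 1"
    for f :: "'h \<Rightarrow> 'h \<Rightarrow> 'h"
    by (simp add: qPsi_def case_prod_beta' o_def)
  show ?thesis
    using ad_ad[of x y z] coproduct_ad_mult[where x = x and y = y]
    by (simp add: qPsi_sum ad_one lin_minus[OF lin_ad])
qed

end
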